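(* Consider the Best-or-Worst secretary problem with $n$ candidates and unequal payoffs $0\le m<M$: selecting the overall worst candidate pays $m$, selecting the overall best candidate pays $M$, and any other outcome (including selecting nobody) pays $0$. Then there exist integers $0\le r(n)\le s(n)\le n$ such that the following strategy maximizes the expected payoff among all strategies: reject the first $r(n)$ interviewed candidates; for the interviews $k$ with $r(n)<k\le s(n)$, accept the first candidate which is better than all the preceding ones; after the $s(n)$-th interview, accept the first candidate which is either better than all the preceding ones or worse than all the preceding ones.
   Context: Setting (secretary-type problem): $n$ candidates have distinct qualities (a strict total order) and are interviewed one at a time in uniformly random order (all $n!$ orders equally likely). After the $k$-th interview, the interviewer knows only the relative ranks of the first $k$ candidates among themselves and must immediately and irrevocably either accept the $k$-th candidate (stopping the process) or reject it; rejected candidates cannot be recalled. A strategy is a rule making this decision at each step using only the relative ranks observed so far (it may accept nobody). *)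

theory Defs
  imports Complex_Main
begin

text \<open>An interview order of n candidates: a list xs that is a permutation of {0..<n};
  xs ! i is the (absolute) quality of the candidate interviewed at step i+1
  (0 = overall worst, n-1 = overall best).\<close>
definition orders :: "nat \<Rightarrow> nat list set" where
  "orders n = {xs. distinct xs \<and> set xs = {0..<n}}"

text \<open>What the interviewer observes after the k-th interview: the relative ranks of the
  first k candidates among themselves (entry i = number of the first k candidates worse
  than the i-th one).\<close>
definition obs :: "nat list \<Rightarrow> nat \<Rightarrow> nat list" where
  "obs xs k = map (\<lambda>i. card {j. j < k \<and> xs ! j < xs ! i}) [0..<k]"

text \<open>A strategy maps the observation after the k-th interview (a list of length k) to the
  decision whether to accept the k-th candidate.  The step at which it stops (if any):\<close>
definition stop_time :: "nat \<Rightarrow> (nat list \<Rightarrow> bool) \<Rightarrow> nat list \<Rightarrow> nat option" where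
  "stop_time n S xs =
     (if \<exists>k\<in>{1..n}. S (obs xs k) then Some (LEAST k. k \<in> {1..n} \<and> S (obs xs k)) else None)"

definition payoff :: "nat \<Rightarrow> real \<Rightarrow> real \<Rightarrow> (nat list \<Rightarrow> bool) \<Rightarrow> nat list \<Rightarrow> real" where
  "payoff n m M S xs =
     (case stop_time n S xs of
        None \<Rightarrow> 0
      | Some k \<Rightarrow> (if xs ! (k - 1) = n - 1 then M else if xs ! (k - 1) = 0 then m else 0))"

definition expected_payoff :: "nat \<Rightarrow> real \<Rightarrow> real \<Rightarrow> (nat list \<Rightarrow> bool) \<Rightarrow> real" where
  "expected_payoff n m M S = (\<Sum>xs\<in>orders n. payoff n m M S xs) / real (card (orders n))"

definition threshold_strategy :: "nat \<Rightarrow> nat \<Rightarrow> nat list \<Rightarrow> bool" where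
  "threshold_strategy r s ob =
     (let k = length ob in
      if k \<le> r then False
      else if k \<le> s then last ob = k - 1
      else (last ob = k - 1 \<or> last ob = 0))"

end

theory Submission
  imports Defs
begin

text \<open>Appending a candidate of relative rank \<open>a \<le> k\<close> to an order of length \<open>k\<close> is a bijection
  onto the orders of length \<open>k + 1\<close>, so the sum over all interview orders unfolds into nested
  sums over the successive relative ranks.  Backward induction along this tree shows that the
  optimal total payoff from step \<open>L\<close> on depends only on \<open>L\<close>, and that a strategy is optimal as
  soon as it stops exactly where stopping is at least as good as continuing.  Stopping on a
  relatively best (worst) candidate at step \<open>L\<close> yields \<open>M\<close> (\<open>m\<close>) in a fraction \<open>L/n\<close> of the
  extensions; comparing with the value of continuing, once stopping on such a candidate is
  preferable it stays preferable at all later steps.  The two points where this starts, for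
  \<open>M\<close> and for \<open>m\<close>, are the thresholds \<open>r\<close> and \<open>s\<close>, and \<open>m < M\<close> gives \<open>r \<le> s\<close>.\<close>

definition lift_rank :: "nat \<Rightarrow> nat \<Rightarrow> nat" where
  "lift_rank a x = (if a \<le> x then Suc x else x)"

definition lower_rank :: "nat \<Rightarrow> nat \<Rightarrow> nat" where
  "lower_rank a x = (if a < x then x - 1 else x)"

text \<open>The order extended by a new last candidate whose relative rank among all \<open>length xs + 1\<close>
  candidates is \<open>a\<close>.\<close>
definition snoc_rank :: "nat list \<Rightarrow> nat \<Rightarrow> nat list" where
  "snoc_rank xs a = map (lift_rank a) xs @ [a]"

lemma lift_rank_less_iff [simp]: "lift_rank a x < lift_rank a y \<longleftrightarrow> x < y"
  by (auto simp: lift_rank_def)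

lemma lower_lift_rank [simp]: "lower_rank a (lift_rank a x) = x"
  by (simp add: lift_rank_def lower_rank_def)

lemma lift_lower_rank: "x \<noteq> a \<Longrightarrow> lift_rank a (lower_rank a x) = x"
  by (auto simp: lift_rank_def lower_rank_def)

lemma inj_lift_rank: "inj (lift_rank a)"
  by (metis injI lower_lift_rank)

lemma lift_rank_image: "a \<le> n \<Longrightarrow> lift_rank a ` {0..<n} = {0..<Suc n} - {a}"
proof (intro equalityI subsetI)
  fix y assume "a \<le> n" "y \<in> {0..<Suc n} - {a}"
  then have "lower_rank a y \<in> {0..<n}" "y = lift_rank a (lower_rank a y)"
    using lift_lower_rank[of y a] by (auto simp: lower_rank_def)
  then show "y \<in> lift_rank a ` {0..<n}" by blast
qed (auto simp: lift_rank_def)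

lemma length_snoc_rank [simp]: "length (snoc_rank xs a) = Suc (length xs)"
  by (simp add: snoc_rank_def)

lemma nth_snoc_rank: "i < length xs \<Longrightarrow> snoc_rank xs a ! i = lift_rank a (xs ! i)"
  by (simp add: snoc_rank_def nth_append)

lemma nth_snoc_rank_last [simp]: "snoc_rank xs a ! length xs = a"
  by (simp add: snoc_rank_def nth_append)

lemma obs_snoc_rank:
  assumes "i \<le> length xs"
  shows "obs (snoc_rank xs a) i = obs xs i"
proof -
  have "{j. j < i \<and> snoc_rank xs a ! j < snoc_rank xs a ! k} = {j. j < i \<and> xs ! j < xs ! k}"
    if "k < i" for k
    using that assms by (auto simp: nth_snoc_rank)
  then show ?thesis unfolding obs_def by (intro map_cong refl) auto
qed

lemma length_orders: "xs \<in> orders n \<Longrightarrow> length xs = n"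
  by (auto simp: orders_def dest: distinct_card)

lemma nth_orders_less: "xs \<in> orders n \<Longrightarrow> i < n \<Longrightarrow> xs ! i < n"
  using length_orders[of xs n] by (auto simp: orders_def)

lemma snoc_rank_orders:
  assumes "xs \<in> orders n" "a \<le> n"
  shows "snoc_rank xs a \<in> orders (Suc n)"
  using assms lift_rank_image[OF assms(2)] inj_lift_rank[of a]
  by (auto simp: orders_def snoc_rank_def distinct_map inj_on_def)

lemma orders_Suc: "orders (Suc n) = (\<lambda>(xs, a). snoc_rank xs a) ` (orders n \<times> {..n})"
proof (intro equalityI subsetI)
  fix ys assume ys: "ys \<in> orders (Suc n)"
  then have "ys \<noteq> []" by (auto simp: orders_def)
  then obtain zs a where ys_eq: "ys = zs @ [a]" by (cases ys rule: rev_cases) auto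
  have "distinct (zs @ [a])" "set (zs @ [a]) = {0..<Suc n}"
    using ys by (simp_all add: orders_def ys_eq)
  then have zs: "distinct zs" "set zs = {0..<Suc n} - {a}" and "a \<le> n"
    by auto
  define xs where "xs = map (lower_rank a) zs"
  have zs_eq: "zs = map (lift_rank a) xs"
    unfolding xs_def map_map
    by (rule map_idI[symmetric]) (use zs(2) lift_lower_rank in auto)
  have "set zs = lift_rank a ` {0..<n}"
    using zs(2) lift_rank_image[OF \<open>a \<le> n\<close>] by simp
  then have "set xs = {0..<n}" by (simp add: xs_def image_image)
  moreover have "distinct xs"
    using zs(1) by (simp add: zs_eq distinct_map)
  ultimately have "xs \<in> orders n" by (simp add: orders_def)
  moreover have "snoc_rank xs a = ys" by (simp add: snoc_rank_def ys_eq zs_eq)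
  ultimately show "ys \<in> (\<lambda>(xs, a). snoc_rank xs a) ` (orders n \<times> {..n})"
    using \<open>a \<le> n\<close> by blast
qed (auto intro: snoc_rank_orders)

lemma inj_on_snoc_rank: "inj_on (\<lambda>(xs, a). snoc_rank xs a) X"
proof (rule inj_onI, clarsimp)
  fix xs a ys b assume eq: "snoc_rank xs a = snoc_rank ys b"
  then have "a = b" by (metis snoc_rank_def last_snoc)
  with eq inj_lift_rank show "xs = ys \<and> a = b"
    by (simp add: snoc_rank_def inj_map_eq_map)
qed

lemma sum_orders_Suc:
  "(\<Sum>ys\<in>orders (Suc n). f ys) = (\<Sum>xs\<in>orders n. \<Sum>a\<le>n. f (snoc_rank xs a))"
  unfolding orders_Suc sum.reindex[OF inj_on_snoc_rank]
  by (simp add: sum.cartesian_product split_def)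

lemma obs_orders:
  assumes "xs \<in> orders n"
  shows "obs xs n = xs"
proof (rule nth_equalityI)
  fix i assume "i < length (obs xs n)"
  then have i: "i < n" by (simp add: obs_def)
  have xs: "distinct xs" "set xs = {0..<n}" "length xs = n"
    using assms length_orders by (auto simp: orders_def)
  have "nth xs ` {j. j < n \<and> xs ! j < xs ! i} = {0..<xs ! i}"
  proof (intro equalityI subsetI)
    fix y assume y: "y \<in> {0..<xs ! i}"
    then have "y \<in> set xs" using xs nth_orders_less[OF assms i] by auto
    with y xs(3) show "y \<in> nth xs ` {j. j < n \<and> xs ! j < xs ! i}"
      by (auto simp: in_set_conv_nth)
  qed auto
  moreover have "inj_on (nth xs) {j. j < n \<and> xs ! j < xs ! i}"
    using xs by (auto intro: inj_on_nth)
  ultimately have "card {j. j < n \<and> xs ! j < xs ! i} = xs ! i"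
    by (metis card_atLeastLessThan card_image diff_zero)
  then show "obs xs n ! i = xs ! i" using i by (simp add: obs_def)
qed (simp add: obs_def length_orders[OF assms])

text \<open>The sum of \<open>f\<close> over all \<open>j\<close>-step extensions of \<open>xs\<close>; the extensions of an order of
  length \<open>k\<close> are exactly the orders of length \<open>k + j\<close> whose first \<open>k\<close> candidates are observed
  as in \<open>xs\<close>.\<close>
fun sum_extensions :: "nat list \<Rightarrow> nat \<Rightarrow> (nat list \<Rightarrow> real) \<Rightarrow> real" where
  "sum_extensions xs 0 f = f xs"
| "sum_extensions xs (Suc j) f = (\<Sum>a\<le>length xs. sum_extensions (snoc_rank xs a) j f)"

lemma sum_extensions_cong_obs:
  assumes "\<And>ys. (\<forall>i\<le>length xs. obs ys i = obs xs i) \<Longrightarrow> f ys = g ys"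
  shows "sum_extensions xs j f = sum_extensions xs j g"
  using assms
proof (induction j arbitrary: xs)
  case (Suc j)
  have "sum_extensions (snoc_rank xs a) j f = sum_extensions (snoc_rank xs a) j g" for a
    by (rule Suc.IH) (use Suc.prems in \<open>auto simp: obs_snoc_rank\<close>)
  then show ?case by simp
qed simp

lemma sum_extensions_Suc_inner:
  "sum_extensions xs (Suc j) f = sum_extensions xs j (\<lambda>ys. \<Sum>a\<le>length ys. f (snoc_rank ys a))"
  by (induction j arbitrary: xs) (simp_all del: sum.atMost_Suc length_snoc_rank)

lemma sum_orders_eq_sum_extensions: "(\<Sum>ys\<in>orders n. f ys) = sum_extensions [] n f"
proof (induction n arbitrary: f)
  case 0
  have "orders 0 = {[]}" by (auto simp: orders_def)
  then show ?case by simp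
next
  case (Suc n)
  have "(\<Sum>ys\<in>orders (Suc n). f ys) = (\<Sum>xs\<in>orders n. \<Sum>a\<le>length xs. f (snoc_rank xs a))"
    unfolding sum_orders_Suc by (intro sum.cong) (auto simp: length_orders)
  also have "\<dots> = sum_extensions [] (Suc n) f"
    by (simp only: Suc.IH sum_extensions_Suc_inner)
  finally show ?case .
qed

lemma sum_extensions_linear:
  "sum_extensions xs j (\<lambda>ys. c * f ys + d * g ys)
    = c * sum_extensions xs j f + d * sum_extensions xs j g"
  by (induction j arbitrary: xs) (simp_all add: sum.distrib sum_distrib_left)

text \<open>The number \<open>(N - 1)! / (L - 1)!\<close> of extensions of an order of length \<open>L\<close> to length \<open>N\<close>
  in which a given candidate remains the best (or the worst) one.\<close>
definition keep_extreme :: "nat \<Rightarrow> nat \<Rightarrow> real" where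
  "keep_extreme N L = real (\<Prod>t\<in>{L..<N}. t)"

lemma keep_extreme_self [simp]: "keep_extreme N N = 1"
  by (simp add: keep_extreme_def)

lemma keep_extreme_Suc: "L < N \<Longrightarrow> keep_extreme N L = real L * keep_extreme N (Suc L)"
  by (simp add: keep_extreme_def prod.atLeast_Suc_lessThan)

lemma keep_extreme_nonneg: "0 \<le> keep_extreme N L"
  unfolding keep_extreme_def by (rule of_nat_0_le_iff)

lemma sum_lift_rank_top:
  assumes "x < Suc L"
  shows "(\<Sum>a\<le>Suc L. if lift_rank a x = Suc L then c else 0)
    = (if x = L then real (Suc L) * c else 0)"
proof -
  have "(\<Sum>a\<le>Suc L. if lift_rank a x = Suc L then c else 0)
      = (\<Sum>a\<le>Suc L. if x = L \<and> a \<le> L then c else 0)"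
    using assms by (intro sum.cong) (auto simp: lift_rank_def)
  then show ?thesis by simp
qed

lemma sum_lift_rank_bottom:
  "(\<Sum>a\<le>Suc L. if lift_rank a x = 0 then c else 0) = (if x = 0 then real (Suc L) * c else 0)"
proof -
  have "(\<Sum>a\<le>Suc L. if lift_rank a x = 0 then c else 0)
      = (\<Sum>a\<le>Suc L. if x = 0 \<and> 0 < a then c else 0)"
    by (intro sum.cong) (auto simp: lift_rank_def)
  also have "\<dots> = (\<Sum>a\<le>L. if x = 0 then c else 0)"
    by (subst sum.atMost_Suc_shift) simp
  finally show ?thesis by simp
qed

lemma sum_extensions_top:
  assumes "xs \<in> orders L" "i < L"
  shows "sum_extensions xs j (\<lambda>ys. if ys ! i = L + j - 1 then 1 else 0)
    = (if xs ! i = L - 1 then keep_extreme (L + j) L else 0)"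
  using assms
proof (induction j arbitrary: xs L)
  case (Suc j)
  obtain L' where L: "L = Suc L'" using Suc.prems by (cases L) auto
  have "sum_extensions (snoc_rank xs a) j (\<lambda>ys. if ys ! i = Suc L + j - 1 then 1 else 0)
      = (if lift_rank a (xs ! i) = L then keep_extreme (L + Suc j) (Suc L) else 0)" if "a \<le> L" for a
    using Suc.IH[OF snoc_rank_orders[OF Suc.prems(1) that]] Suc.prems
    by (simp add: nth_snoc_rank length_orders)
  then have "sum_extensions xs (Suc j) (\<lambda>ys. if ys ! i = L + Suc j - 1 then 1 else 0)
      = (\<Sum>a\<le>L. if lift_rank a (xs ! i) = L then keep_extreme (L + Suc j) (Suc L) else 0)"
    using Suc.prems by (simp add: length_orders)
  also have "\<dots> = (if xs ! i = L - 1 then real L * keep_extreme (L + Suc j) (Suc L) else 0)"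
    using nth_orders_less[OF Suc.prems] unfolding L by (subst sum_lift_rank_top) simp_all
  finally show ?case by (simp add: keep_extreme_Suc)
qed simp

lemma sum_extensions_bottom:
  assumes "i < length xs"
  shows "sum_extensions xs j (\<lambda>ys. if ys ! i = 0 then 1 else 0)
    = (if xs ! i = 0 then keep_extreme (length xs + j) (length xs) else 0)"
  using assms
proof (induction j arbitrary: xs)
  case (Suc j)
  define L where "L = length xs"
  have "sum_extensions (snoc_rank xs a) j (\<lambda>ys. if ys ! i = 0 then 1 else 0)
      = (if lift_rank a (xs ! i) = 0 then keep_extreme (L + Suc j) (Suc L) else 0)" for a
    using Suc.IH[of "snoc_rank xs a"] Suc.prems by (simp add: nth_snoc_rank L_def)
  then have "sum_extensions xs (Suc j) (\<lambda>ys. if ys ! i = 0 then 1 else 0)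
      = (\<Sum>a\<le>L. if lift_rank a (xs ! i) = 0 then keep_extreme (L + Suc j) (Suc L) else 0)"
    by (simp add: L_def)
  also have "\<dots> = (if xs ! i = 0 then real L * keep_extreme (L + Suc j) (Suc L) else 0)"
  proof -
    obtain L' where "L = Suc L'" using Suc.prems by (cases L) (auto simp: L_def)
    then show ?thesis by (simp only: sum_lift_rank_bottom)
  qed
  finally show ?case using Suc.prems by (simp add: L_def keep_extreme_Suc)
qed simp

definition stop_payoff :: "nat \<Rightarrow> real \<Rightarrow> real \<Rightarrow> nat \<Rightarrow> nat list \<Rightarrow> real" where
  "stop_payoff N m M L ys = (if ys ! (L - 1) = N - 1 then M else if ys ! (L - 1) = 0 then m else 0)"

text \<open>For \<open>N \<ge> 2\<close>, the total of \<open>stop_payoff\<close> over all extensions to length \<open>N\<close> of an order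
  of length \<open>L\<close> whose last candidate has relative rank \<open>a\<close>.  For \<open>L = 1\<close> both terms count:
  the first candidate becomes the best in some extensions and the worst in others.\<close>
definition stop_value :: "nat \<Rightarrow> real \<Rightarrow> real \<Rightarrow> nat \<Rightarrow> nat \<Rightarrow> real" where
  "stop_value N m M L a =
     keep_extreme N L * ((if a = L - 1 then M else 0) + (if a = 0 then m else 0))"

lemma sum_extensions_stop_payoff:
  assumes "xs \<in> orders k" "a \<le> k" "k + Suc j = N" "2 \<le> N"
  shows "sum_extensions (snoc_rank xs a) j (stop_payoff N m M (Suc k)) = stop_value N m M (Suc k) a"
proof -
  define ys where "ys = snoc_rank xs a"
  have ys: "ys \<in> orders (Suc k)" "length ys = Suc k" "ys ! k = a"
    using snoc_rank_orders[OF assms(1,2)] nth_snoc_rank_last[of xs a] length_orders[OF assms(1)]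
    by (simp_all add: ys_def)
  have "stop_payoff N m M (Suc k)
      = (\<lambda>zs. M * (if zs ! k = Suc k + j - 1 then 1 else 0) + m * (if zs ! k = 0 then 1 else 0))"
    using assms(3,4) by (auto simp: stop_payoff_def fun_eq_iff)
  then have "sum_extensions ys j (stop_payoff N m M (Suc k))
      = M * (if a = k then keep_extreme N (Suc k) else 0)
        + m * (if a = 0 then keep_extreme N (Suc k) else 0)"
    using sum_extensions_top[OF ys(1), of k j] sum_extensions_bottom[of k ys j] ys
    by (simp add: sum_extensions_linear assms(3)[symmetric])
  then show ?thesis by (simp add: ys_def stop_value_def algebra_simps)
qed

lemma stop_time_eq_Some:
  assumes "1 \<le> L" "L \<le> N" "S (obs ys L)" "\<forall>i\<in>{1..<L}. \<not> S (obs ys i)"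
  shows "stop_time N S ys = Some L"
proof -
  have L: "L \<in> {1..N} \<and> S (obs ys L)" using assms(1-3) by simp
  have "(LEAST i. i \<in> {1..N} \<and> S (obs ys i)) = L"
  proof (rule Least_equality)
    fix i assume "i \<in> {1..N} \<and> S (obs ys i)"
    with assms(4) show "L \<le> i" by (metis atLeastAtMost_iff atLeastLessThan_iff not_le)
  qed (fact L)
  with L show ?thesis unfolding stop_time_def by (metis (no_types, lifting))
qed

lemma stop_time_eq_None: "\<forall>i\<in>{1..N}. \<not> S (obs ys i) \<Longrightarrow> stop_time N S ys = None"
  by (simp add: stop_time_def)

lemma sum_extensions_payoff_Suc:
  assumes "length xs = k" "k + Suc j = N" "\<forall>i\<in>{1..k}. \<not> S (obs xs i)"
  shows "sum_extensions xs (Suc j) (payoff N m M S) =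
    (\<Sum>a\<le>k. if S (obs (snoc_rank xs a) (Suc k))
             then sum_extensions (snoc_rank xs a) j (stop_payoff N m M (Suc k))
             else sum_extensions (snoc_rank xs a) j (payoff N m M S))"
proof -
  have "sum_extensions (snoc_rank xs a) j (payoff N m M S)
      = sum_extensions (snoc_rank xs a) j (stop_payoff N m M (Suc k))"
    if accept: "S (obs (snoc_rank xs a) (Suc k))" for a
  proof (rule sum_extensions_cong_obs)
    fix ys assume obs_ys: "\<forall>i\<le>length (snoc_rank xs a). obs ys i = obs (snoc_rank xs a) i"
    have "stop_time N S ys = Some (Suc k)"
    proof (rule stop_time_eq_Some)
      show "S (obs ys (Suc k))" using accept obs_ys assms(1) by simp
      show "\<forall>i\<in>{1..<Suc k}. \<not> S (obs ys i)"
      proof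
        fix i assume i: "i \<in> {1..<Suc k}"
        then have "obs ys i = obs xs i" using obs_ys assms(1) obs_snoc_rank[of i xs a] by simp
        then show "\<not> S (obs ys i)" using assms(3) i by simp
      qed
    qed (use assms(2) in auto)
    then show "payoff N m M S ys = stop_payoff N m M (Suc k) ys"
      by (simp add: payoff_def stop_payoff_def)
  qed
  then show ?thesis unfolding sum_extensions.simps assms(1) by (intro sum.cong refl) simp
qed

lemma sum_extensions_payoff_0:
  assumes "length xs = N" "\<forall>i\<in>{1..N}. \<not> S (obs xs i)"
  shows "sum_extensions xs 0 (payoff N m M S) = 0"
  using stop_time_eq_None[OF assms(2)] by (simp add: payoff_def)

text \<open>Backward induction: the best total payoff, over all extensions to length \<open>N\<close>, achievable by a
  strategy that has not stopped during the first \<open>N - j\<close> interviews.  It does not depend on the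
  observations made so far, because the relative rank of the next candidate is uniform.\<close>
fun opt_value :: "nat \<Rightarrow> real \<Rightarrow> real \<Rightarrow> nat \<Rightarrow> real" where
  "opt_value N m M 0 = 0"
| "opt_value N m M (Suc j) = (\<Sum>a\<le>N - Suc j. max (stop_value N m M (N - j) a) (opt_value N m M j))"

lemma opt_value_nonneg: "0 \<le> m \<Longrightarrow> 0 \<le> M \<Longrightarrow> 0 \<le> opt_value N m M j"
  by (induction j) (auto intro!: sum_nonneg simp: max_def)

lemma opt_value_step:
  assumes "L < N"
  shows "opt_value N m M (N - L)
    = (\<Sum>a\<le>L. max (stop_value N m M (Suc L) a) (opt_value N m M (N - Suc L)))"
proof -
  have "N - L = Suc (N - Suc L)" "N - Suc (N - Suc L) = L" "N - (N - Suc L) = Suc L"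
    using assms by auto
  then show ?thesis by (simp only: opt_value.simps)
qed

lemma sum_extensions_payoff_le_opt_value:
  assumes "2 \<le> N"
  shows "xs \<in> orders k \<Longrightarrow> k + j = N \<Longrightarrow> \<forall>i\<in>{1..k}. \<not> S (obs xs i) \<Longrightarrow>
    sum_extensions xs j (payoff N m M S) \<le> opt_value N m M j"
proof (induction j arbitrary: xs k)
  case 0
  then show ?case using sum_extensions_payoff_0[of xs N S] by (simp add: length_orders)
next
  case (Suc j)
  have "(if S (obs (snoc_rank xs a) (Suc k))
         then sum_extensions (snoc_rank xs a) j (stop_payoff N m M (Suc k))
         else sum_extensions (snoc_rank xs a) j (payoff N m M S))
      \<le> max (stop_value N m M (Suc k) a) (opt_value N m M j)" if "a \<le> k" for a
  proof (cases "S (obs (snoc_rank xs a) (Suc k))")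
    case True
    then show ?thesis
      using sum_extensions_stop_payoff[OF Suc.prems(1) that _ assms] Suc.prems(2) by simp
  next
    case False
    then have "\<forall>i\<in>{1..Suc k}. \<not> S (obs (snoc_rank xs a) i)"
      using Suc.prems(1,3) by (auto simp: le_Suc_eq obs_snoc_rank length_orders)
    then show ?thesis
      using Suc.IH[OF snoc_rank_orders[OF Suc.prems(1) that]] Suc.prems(2) False by simp
  qed
  then have "sum_extensions xs (Suc j) (payoff N m M S)
      \<le> (\<Sum>a\<le>k. max (stop_value N m M (Suc k) a) (opt_value N m M j))"
    unfolding sum_extensions_payoff_Suc[OF length_orders[OF Suc.prems(1)] Suc.prems(2,3)]
    by (intro sum_mono) simp
  also have "\<dots> = opt_value N m M (Suc j)"
  proof -
    have "N - Suc j = k" "N - j = Suc k" using Suc.prems(2) by auto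
    then show ?thesis by (simp only: opt_value.simps)
  qed
  finally show ?case .
qed

definition threshold_accepts :: "nat \<Rightarrow> nat \<Rightarrow> nat \<Rightarrow> nat \<Rightarrow> bool" where
  "threshold_accepts r s L a =
     (if L \<le> r then False else if L \<le> s then a = L - 1 else a = L - 1 \<or> a = 0)"

definition threshold_optimal :: "nat \<Rightarrow> real \<Rightarrow> real \<Rightarrow> nat \<Rightarrow> nat \<Rightarrow> bool" where
  "threshold_optimal N m M r s \<longleftrightarrow> (\<forall>L a. 1 \<le> L \<longrightarrow> L \<le> N \<longrightarrow> a < L \<longrightarrow>
     (if threshold_accepts r s L a then stop_value N m M L a else opt_value N m M (N - L))
     = max (stop_value N m M L a) (opt_value N m M (N - L)))"

lemma threshold_strategy_snoc_rank:
  assumes "xs \<in> orders k" "a \<le> k"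
  shows "threshold_strategy r s (obs (snoc_rank xs a) (Suc k)) = threshold_accepts r s (Suc k) a"
proof -
  have "obs (snoc_rank xs a) (Suc k) = snoc_rank xs a"
    by (rule obs_orders[OF snoc_rank_orders[OF assms]])
  moreover have "length (snoc_rank xs a) = Suc k" "last (snoc_rank xs a) = a"
    using length_orders[OF assms(1)] by (simp_all add: snoc_rank_def)
  ultimately show ?thesis by (simp add: threshold_strategy_def threshold_accepts_def)
qed

lemma sum_extensions_payoff_threshold:
  assumes "2 \<le> N"
    and optimal: "threshold_optimal N m M r s"
  shows "xs \<in> orders k \<Longrightarrow> k + j = N \<Longrightarrow> \<forall>i\<in>{1..k}. \<not> threshold_strategy r s (obs xs i) \<Longrightarrow>
    sum_extensions xs j (payoff N m M (threshold_strategy r s)) = opt_value N m M j"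
proof (induction j arbitrary: xs k)
  case 0
  then show ?case using sum_extensions_payoff_0 by (simp add: length_orders)
next
  case (Suc j)
  have remaining: "N - Suc k = j" using Suc.prems(2) by simp
  have step_optimal:
    "(if threshold_accepts r s (Suc k) a then stop_value N m M (Suc k) a else opt_value N m M j)
      = max (stop_value N m M (Suc k) a) (opt_value N m M j)" if "a \<le> k" for a
    unfolding remaining[symmetric]
    by (rule optimal[unfolded threshold_optimal_def, rule_format]) (use that Suc.prems(2) in auto)
  have "(if threshold_strategy r s (obs (snoc_rank xs a) (Suc k))
         then sum_extensions (snoc_rank xs a) j (stop_payoff N m M (Suc k))
         else sum_extensions (snoc_rank xs a) j (payoff N m M (threshold_strategy r s)))
      = max (stop_value N m M (Suc k) a) (opt_value N m M j)" if "a \<le> k" for a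
  proof (cases "threshold_accepts r s (Suc k) a")
    case True
    then show ?thesis
      using sum_extensions_stop_payoff[OF Suc.prems(1) that _ assms(1)] step_optimal[OF that]
        threshold_strategy_snoc_rank[OF Suc.prems(1) that] Suc.prems(2) remaining that by simp
  next
    case False
    then have "\<forall>i\<in>{1..Suc k}. \<not> threshold_strategy r s (obs (snoc_rank xs a) i)"
      using Suc.prems(1,3) threshold_strategy_snoc_rank[OF Suc.prems(1) that]
      by (auto simp: le_Suc_eq obs_snoc_rank length_orders)
    then show ?thesis
      using Suc.IH[OF snoc_rank_orders[OF Suc.prems(1) that]] step_optimal[OF that]
        threshold_strategy_snoc_rank[OF Suc.prems(1) that] Suc.prems(2) remaining that False
      by simp
  qed
  then have "sum_extensions xs (Suc j) (payoff N m M (threshold_strategy r s))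
      = (\<Sum>a\<le>k. max (stop_value N m M (Suc k) a) (opt_value N m M j))"
    unfolding sum_extensions_payoff_Suc[OF length_orders[OF Suc.prems(1)] Suc.prems(2,3)]
    by (intro sum.cong) simp_all
  also have "\<dots> = opt_value N m M (Suc j)"
  proof -
    have "N - Suc j = k" "N - j = Suc k" using Suc.prems(2) by auto
    then show ?thesis by (simp only: opt_value.simps)
  qed
  finally show ?case .
qed

lemma opt_value_Suc_le:
  assumes "L < N"
  shows "real (Suc L) * opt_value N m M (N - Suc L) \<le> opt_value N m M (N - L)"
proof -
  have "real (Suc L) * opt_value N m M (N - Suc L) = (\<Sum>a\<le>L. opt_value N m M (N - Suc L))"
    by simp
  also have "\<dots> \<le> (\<Sum>a\<le>L. max (stop_value N m M (Suc L) a) (opt_value N m M (N - Suc L)))"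
    by (intro sum_mono) simp
  finally show ?thesis using opt_value_step[OF assms] by simp
qed

text \<open>The monotone case of optimal stopping: from step \<open>L\<close> to \<open>L + 1\<close> the value of stopping on
  an extreme candidate shrinks by the factor \<open>L\<close>, the value of continuing by at least \<open>L + 1\<close>.\<close>
lemma opt_value_le_stop_Suc:
  assumes "0 \<le> c" "1 \<le> L" "L < N" "opt_value N m M (N - L) \<le> keep_extreme N L * c"
  shows "opt_value N m M (N - Suc L) \<le> keep_extreme N (Suc L) * c"
proof -
  have "real (Suc L) * opt_value N m M (N - Suc L) \<le> real L * (keep_extreme N (Suc L) * c)"
    using opt_value_Suc_le[OF assms(3), of m M] assms(4) keep_extreme_Suc[OF assms(3)] by simp
  also have "\<dots> \<le> real (Suc L) * (keep_extreme N (Suc L) * c)"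
    using assms(1) keep_extreme_nonneg by (intro mult_right_mono) auto
  finally show ?thesis by (simp del: of_nat_Suc)
qed

lemma opt_value_le_stop_mono:
  assumes "0 \<le> c" "1 \<le> L" "L \<le> L'" "L' \<le> N" "opt_value N m M (N - L) \<le> keep_extreme N L * c"
  shows "opt_value N m M (N - L') \<le> keep_extreme N L' * c"
  using assms(3,4)
proof (induction L' rule: dec_induct)
  case (step L')
  then show ?case using opt_value_le_stop_Suc[OF assms(1), of L' N m M] assms(2) by simp
qed (use assms(5) in simp)

lemma stop_next_le_opt_value:
  assumes "L < N"
  shows "(M + m) * keep_extreme N (Suc L) \<le> opt_value N m M (N - L)"
proof -
  have "(\<Sum>a\<le>L. (if a = L then M else 0) + (if a = 0 then m else 0)) = M + m"
    by (simp add: sum.distrib)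
  then have "(M + m) * keep_extreme N (Suc L) = (\<Sum>a\<le>L. stop_value N m M (Suc L) a)"
    by (simp add: stop_value_def sum_distrib_left[symmetric] mult.commute)
  also have "\<dots> \<le> (\<Sum>a\<le>L. max (stop_value N m M (Suc L) a) (opt_value N m M (N - Suc L)))"
    by (intro sum_mono) simp
  finally show ?thesis using opt_value_step[OF assms] by simp
qed

lemma upward_closed_threshold:
  fixes N :: nat
  assumes "\<And>L L'. 1 \<le> L \<Longrightarrow> L \<le> L' \<Longrightarrow> L' \<le> N \<Longrightarrow> P L \<Longrightarrow> P L'"
  obtains r where "r \<le> N" "\<And>L. 1 \<le> L \<Longrightarrow> L \<le> N \<Longrightarrow> P L \<longleftrightarrow> r < L"
proof
  define r where "r = (LEAST r. \<forall>L. r < L \<and> L \<le> N \<longrightarrow> P L)"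
  show "r \<le> N" unfolding r_def by (rule Least_le) auto
  fix L assume L: "1 \<le> L" "L \<le> N"
  show "P L \<longleftrightarrow> r < L"
  proof
    assume "P L"
    then have "\<forall>L'. L - 1 < L' \<and> L' \<le> N \<longrightarrow> P L'" using assms L by auto
    then have "r \<le> L - 1" unfolding r_def by (rule Least_le)
    then show "r < L" using L by simp
  next
    have "\<forall>L. r < L \<and> L \<le> N \<longrightarrow> P L"
      unfolding r_def by (rule LeastI[of _ N]) auto
    then show "r < L \<Longrightarrow> P L" using L by simp
  qed
qed

lemma threshold_optimalI:
  assumes "0 \<le> m" "m < M" "2 \<le> N" "r \<le> s"
    and r: "\<And>L. 1 \<le> L \<Longrightarrow> L \<le> N \<Longrightarrow> opt_value N m M (N - L) \<le> keep_extreme N L * M \<longleftrightarrow> r < L"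
    and s: "\<And>L. 1 \<le> L \<Longrightarrow> L \<le> N \<Longrightarrow> opt_value N m M (N - L) \<le> keep_extreme N L * m \<longleftrightarrow> s < L"
  shows "threshold_optimal N m M r s"
  unfolding threshold_optimal_def
proof (intro allI impI)
  fix L a assume L: "1 \<le> L" "L \<le> N" "a < L"
  consider "L = 1" | "2 \<le> L" "a = L - 1" | "2 \<le> L" "a = 0" | "a \<noteq> L - 1" "a \<noteq> 0"
    using L by linarith
  then show "(if threshold_accepts r s L a then stop_value N m M L a else opt_value N m M (N - L))
    = max (stop_value N m M L a) (opt_value N m M (N - L))"
  proof cases
    case 1
    then have "a = 0" using L by simp
    with 1 have stop: "stop_value N m M L a = keep_extreme N 1 * (M + m)"
      using L by (simp add: stop_value_def)
    show ?thesis
    proof (cases "r = 0")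
      case True
      have "opt_value N m M (N - 1) \<le> keep_extreme N 1 * M" using r[of 1] True assms(3) by simp
      also have "\<dots> \<le> keep_extreme N 1 * (M + m)"
        using assms(1) keep_extreme_nonneg by (intro mult_left_mono) auto
      finally show ?thesis using 1 \<open>a = 0\<close> True stop by (simp add: threshold_accepts_def)
    next
      case False
      have "keep_extreme N 1 * (M + m) = (M + m) * keep_extreme N (Suc 1)"
        using keep_extreme_Suc[of 1 N] assms(3) by simp
      also have "\<dots> \<le> opt_value N m M (N - 1)"
        using stop_next_le_opt_value[of 1 N] assms(3) by simp
      finally show ?thesis using 1 \<open>a = 0\<close> False stop by (simp add: threshold_accepts_def)
    qed
  next
    case 2
    then have "stop_value N m M L a = keep_extreme N L * M" by (simp add: stop_value_def)
    then show ?thesis using 2 r[OF L(1,2)] by (auto simp: threshold_accepts_def)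
  next
    case 3
    then have "stop_value N m M L a = keep_extreme N L * m" by (simp add: stop_value_def)
    then show ?thesis using 3 s[OF L(1,2)] \<open>r \<le> s\<close> by (auto simp: threshold_accepts_def)
  qed (use opt_value_nonneg[of m M N "N - L"] assms(1,2)
       in \<open>auto simp: stop_value_def threshold_accepts_def\<close>)
qed

lemma optimal_thresholds_exist:
  assumes "0 \<le> m" "m < M" "2 \<le> N"
  obtains r s where "r \<le> s" "s \<le> N" "threshold_optimal N m M r s"
proof -
  have up: "opt_value N m M (N - L') \<le> keep_extreme N L' * c"
    if "0 \<le> c" "1 \<le> L" "L \<le> L'" "L' \<le> N" "opt_value N m M (N - L) \<le> keep_extreme N L * c"
    for c L L'
    using opt_value_le_stop_mono that by blast
  have "0 \<le> M" using assms(1,2) by simp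
  obtain r where "r \<le> N"
    and r: "\<And>L. 1 \<le> L \<Longrightarrow> L \<le> N \<Longrightarrow> opt_value N m M (N - L) \<le> keep_extreme N L * M \<longleftrightarrow> r < L"
    by (rule upward_closed_threshold[OF up[OF \<open>0 \<le> M\<close>]]) auto
  obtain s where "s \<le> N"
    and s: "\<And>L. 1 \<le> L \<Longrightarrow> L \<le> N \<Longrightarrow> opt_value N m M (N - L) \<le> keep_extreme N L * m \<longleftrightarrow> s < L"
    by (rule upward_closed_threshold[OF up[OF assms(1)]]) auto
  have "r \<le> s"
  proof (cases "s < N")
    case True
    have "opt_value N m M (N - Suc s) \<le> keep_extreme N (Suc s) * m" using s[of "Suc s"] True by simp
    also have "\<dots> \<le> keep_extreme N (Suc s) * M"
      using assms(2) keep_extreme_nonneg by (intro mult_left_mono) auto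
    finally show ?thesis using r[of "Suc s"] True by simp
  next
    case False
    with \<open>r \<le> N\<close> \<open>s \<le> N\<close> show ?thesis by simp
  qed
  show ?thesis
    by (rule that[OF \<open>r \<le> s\<close> \<open>s \<le> N\<close> threshold_optimalI[OF assms \<open>r \<le> s\<close> r s]])
qed

lemma sum_payoff_le_opt_value:
  assumes "2 \<le> n"
  shows "(\<Sum>xs\<in>orders n. payoff n m M S xs) \<le> opt_value n m M n"
proof -
  have "[] \<in> orders 0" by (simp add: orders_def)
  from sum_extensions_payoff_le_opt_value[OF assms this, of n S] show ?thesis
    by (simp add: sum_orders_eq_sum_extensions)
qed

lemma sum_payoff_threshold:
  assumes "2 \<le> n"
    and "threshold_optimal n m M r s"
  shows "(\<Sum>xs\<in>orders n. payoff n m M (threshold_strategy r s) xs) = opt_value n m M n"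
proof -
  have "[] \<in> orders 0" by (simp add: orders_def)
  from sum_extensions_payoff_threshold[OF assms this, of n] show ?thesis
    by (simp add: sum_orders_eq_sum_extensions)
qed

lemma sum_payoff_one: "(\<Sum>xs\<in>orders 1. payoff 1 m M S xs) = (if S [0] then M else 0)"
proof -
  have "obs [0] 1 = [0]" by (simp add: obs_def)
  then have "stop_time 1 S [0] = (if S [0] then Some 1 else None)"
    using stop_time_eq_Some[of 1 1 S "[0]"] stop_time_eq_None[of 1 S "[0]"] by simp
  then show ?thesis
    by (simp add: sum_orders_eq_sum_extensions snoc_rank_def payoff_def)
qed

lemma expected_payoff_mono:
  assumes "(\<Sum>xs\<in>orders n. payoff n m M S xs) \<le> (\<Sum>xs\<in>orders n. payoff n m M T xs)"
  shows "expected_payoff n m M S \<le> expected_payoff n m M T"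
  using assms unfolding expected_payoff_def by (intro divide_right_mono) auto

theorem theorem5:
  fixes n :: nat and m M :: real
  assumes "0 \<le> m" and "m < M"
  shows "\<exists>r s. r \<le> s \<and> s \<le> n \<and>
           (\<forall>S. expected_payoff n m M S \<le> expected_payoff n m M (threshold_strategy r s))"
proof -
  consider "n = 0" | "n = 1" | "2 \<le> n" by linarith
  then show ?thesis
  proof cases
    case 1
    then show ?thesis
      by (auto simp: expected_payoff_def sum_orders_eq_sum_extensions payoff_def stop_time_def)
  next
    case 2
    have "threshold_strategy 0 0 [0]" by (simp add: threshold_strategy_def)
    then have "expected_payoff 1 m M S \<le> expected_payoff 1 m M (threshold_strategy 0 0)" for S
      using assms by (intro expected_payoff_mono) (simp only: sum_payoff_one, simp)
    then show ?thesis using 2 by auto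
  next
    case 3
    obtain r s where "r \<le> s" "s \<le> n" and optimal: "threshold_optimal n m M r s"
      using optimal_thresholds_exist[OF assms 3] by blast
    have "expected_payoff n m M S \<le> expected_payoff n m M (threshold_strategy r s)" for S
      by (rule expected_payoff_mono)
        (simp add: sum_payoff_le_opt_value[OF 3] sum_payoff_threshold[OF 3 optimal])
    with \<open>r \<le> s\<close> \<open>s \<le> n\<close> show ?thesis by blast
  qed
qed

end
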